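(* Let $\mathcal{T}\in\mathbb{K}^{R\times R\times K}$ be slice mix invertible, and let $\{(\mathscr{L}_j,\mathbf{x}_j)\}_{j=1}^\ell$ be JGE pairs of $\mathcal{T}$ with $\mathscr{L}_1,\dots,\mathscr{L}_\ell$ pairwise distinct. Then $\{\mathbf{x}_j\}_{j=1}^\ell$ is linearly independent. Consequently, if $\mathcal{T}$ is simple and each of its JGE values has geometric multiplicity at least one, then the JGE vectors of $\mathcal{T}$ contain a basis of $\mathbb{K}^R$.
   Context: $\mathbb{K}$ denotes $\mathbb{R}$ or $\mathbb{C}$. For $\mathcal{T}\in\mathbb{K}^{R\times R\times K}$ with slices $\mathbf{T}_k=\mathcal{T}(:,:,k)$: slice mix invertible means some linear combination of the $\mathbf{T}_k$ is invertible. A nonzero $\mathbf{x}$ is a JGE vector if there are $\boldsymbol{\lambda}\in\mathbb{K}^K$ and nonzero $\mathbf{y}\in\mathbb{K}^R$ with $\mathbf{T}_\ell\mathbf{x}=\lambda_\ell\mathbf{y}$ for all $\ell$; then $\mathrm{span}(\boldsymbol{\lambda})$ is a JGE value and $(\mathrm{span}(\boldsymbol{\lambda}),\mathbf{x})$ a JGE pair. $p_{\mathcal{T}}(\boldsymbol{\gamma})=\det(\sum_k\gamma_k\mathbf{T}_k)$; the algebraic multiplicity of $\mathrm{span}(\boldsymbol{\lambda})$ is the largest $m$ with $(\sum_k\lambda_k\gamma_k)^m\mid p_{\mathcal{T}}$ (so JGE values are understood to include such $\mathrm{span}(\boldsymbol\lambda)$ with positive algebraic multiplicity); the geometric multiplicity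 is the dimension of the span of JGE vectors paired with it. $\mathcal{T}$ is simple if it is slice mix invertible and $p_{\mathcal{T}}$ is a product of $R$ pairwise non-proportional linear forms. *)

theory Defs
  imports "HOL-Analysis.Analysis"
begin

text \<open>A tensor in K^(R x R x K) is given by its K frontal slices
  T k :: 'a^'r^'r (k :: 'k).  R = CARD('r), K = CARD('k).
  The scalar field 'a is a real normed field, i.e. (up to isomorphism) R or C.\<close>

definition slice_mix :: "('k::finite \<Rightarrow> 'a::field^'r^'r) \<Rightarrow> 'a^'k \<Rightarrow> 'a^'r^'r" where
  "slice_mix T \<gamma> = (\<chi> i j. \<Sum>k\<in>UNIV. \<gamma>$k * T k $ i $ j)"

definition slice_mix_invertible :: "('k::finite \<Rightarrow> 'a::field^'r::finite^'r) \<Rightarrow> bool" where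
  "slice_mix_invertible T \<longleftrightarrow> (\<exists>\<gamma>. invertible (slice_mix T \<gamma>))"

definition jge_pair :: "('k::finite \<Rightarrow> 'a::field^'r::finite^'r) \<Rightarrow> ('a^'k) set \<Rightarrow> 'a^'r \<Rightarrow> bool" where
  "jge_pair T L x \<longleftrightarrow> x \<noteq> 0 \<and>
     (\<exists>lam y. y \<noteq> 0 \<and> L = vec.span {lam} \<and> (\<forall>l. T l *v x = lam$l *s y))"

definition jge_vector :: "('k::finite \<Rightarrow> 'a::field^'r::finite^'r) \<Rightarrow> 'a^'r \<Rightarrow> bool" where
  "jge_vector T x \<longleftrightarrow> (\<exists>L. jge_pair T L x)"

definition char_poly :: "('k::finite \<Rightarrow> 'a::field^'r::finite^'r) \<Rightarrow> 'a^'k \<Rightarrow> 'a" where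
  "char_poly T \<gamma> = det (slice_mix T \<gamma>)"

text \<open>polynomial functions in the K variables gamma_1..gamma_K (over an infinite
  field these are the same as polynomials)\<close>
definition poly_fun :: "('a::field^'k::finite \<Rightarrow> 'a) \<Rightarrow> bool" where
  "poly_fun f \<longleftrightarrow> (\<exists>(c :: ('k \<Rightarrow> nat) \<Rightarrow> 'a) E. finite E \<and>
      (\<forall>\<gamma>. f \<gamma> = (\<Sum>e\<in>E. c e * (\<Prod>k\<in>UNIV. (\<gamma>$k) ^ e k))))"

definition lin_form :: "'a::field^'k::finite \<Rightarrow> 'a^'k \<Rightarrow> 'a" where
  "lin_form lam \<gamma> = (\<Sum>k\<in>UNIV. lam$k * \<gamma>$k)"

definition alg_mult :: "('k::finite \<Rightarrow> 'a::field^'r::finite^'r) \<Rightarrow> 'a^'k \<Rightarrow> nat" where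
  "alg_mult T lam = (GREATEST m. \<exists>q. poly_fun q \<and>
      (\<forall>\<gamma>. char_poly T \<gamma> = (lin_form lam \<gamma>) ^ m * q \<gamma>))"

definition jge_value :: "('k::finite \<Rightarrow> 'a::field^'r::finite^'r) \<Rightarrow> ('a^'k) set \<Rightarrow> bool" where
  "jge_value T L \<longleftrightarrow> (\<exists>x. jge_pair T L x) \<or>
     (\<exists>lam. L = vec.span {lam} \<and> alg_mult T lam > 0)"

definition geom_mult :: "('k::finite \<Rightarrow> 'a::field^'r::finite^'r) \<Rightarrow> ('a^'k) set \<Rightarrow> nat" where
  "geom_mult T L = vec.dim {x. jge_pair T L x}"

definition simple_tensor :: "('k::finite \<Rightarrow> 'a::field^'r::finite^'r) \<Rightarrow> bool" where
  "simple_tensor T \<longleftrightarrow> slice_mix_invertible T \<and>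
     (\<exists>a :: 'r \<Rightarrow> 'a^'k.
        (\<forall>\<gamma>. char_poly T \<gamma> = (\<Prod>r\<in>UNIV. lin_form (a r) \<gamma>)) \<and>
        (\<forall>r s. r \<noteq> s \<longrightarrow> \<not> (\<exists>c. a r = c *s a s \<or> a s = c *s a r)))"

end

theory Submission
  imports Defs "HOL-Computational_Algebra.Polynomial"
begin

text \<open>Fix \<open>\<gamma>\<close> with \<open>M = \<Sum>\<^sub>k \<gamma>\<^sub>k T\<^sub>k\<close> invertible. A JGE pair \<open>T\<^sub>l x = \<lambda>\<^sub>l y\<close> gives
  \<open>M x = c y\<close> with \<open>c = \<Sum>\<^sub>k \<lambda>\<^sub>k \<gamma>\<^sub>k \<noteq> 0\<close>, so \<open>x\<close> is a common eigenvector of the matrices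
  \<open>M\<^sup>-\<^sup>1 T\<^sub>l\<close> whose eigenvalue vector \<open>\<lambda> / c\<close> spans the JGE value. Distinct JGE values
  thus give distinct eigenvalue vectors, and common eigenvectors for distinct eigenvalue
  vectors are independent by the usual elimination argument.

  For a simple tensor, each of the \<open>R\<close> linear factors of \<open>p\<^sub>T\<close> has positive algebraic
  multiplicity (the multiplicity is finite because \<open>p\<^sub>T\<close> restricted to a line through a
  point where it does not vanish is a nonzero polynomial of degree \<open>R\<close>). Non-proportional
  factors span distinct JGE values, so one JGE vector for each gives \<open>R\<close> independent
  vectors.\<close>

lemma slice_mix_mult_vector:
  "slice_mix T \<gamma> *v x = (\<Sum>k\<in>UNIV. \<gamma>$k *s (T k *v x))"
  unfolding vec_eq_iff
  by (auto simp: matrix_vector_mult_def slice_mix_def sum_distrib_left sum_distrib_right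
      mult.assoc sum_component intro: sum.swap)

lemma slice_mix_mult_jge_vector:
  assumes "\<forall>l. T l *v x = lam$l *s y"
  shows "slice_mix T \<gamma> *v x = lin_form lam \<gamma> *s y"
  using assms
  by (simp add: slice_mix_mult_vector lin_form_def vec.scale_sum_left mult.commute)

lemma vec_span_singleton_scale:
  fixes v :: "'a::field^'n"
  assumes "c \<noteq> 0"
  shows "vec.span {c *s v} = vec.span {v}"
proof -
  have "v = (1 / c) *s (c *s v)" using assms by simp
  then show ?thesis
    unfolding vec.span_eq by (metis empty_subsetI insert_subset vec.span_base
        vec.span_scale singletonI)
qed

lemma common_eigenvectors_combination_zero:
  fixes A :: "'l \<Rightarrow> 'a::field^'n^'n" and x :: "nat \<Rightarrow> 'a^'n"
  assumes "\<forall>j<n. x j \<noteq> 0"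
    and "\<forall>j<n. \<forall>l. A l *v x j = \<mu> j l *s x j"
    and "inj_on \<mu> {..<n}"
    and "(\<Sum>j<n. c j *s x j) = 0"
  shows "\<forall>j<n. c j = 0"
  using assms
proof (induction n arbitrary: c)
  case 0
  then show ?case by simp
next
  case (Suc n)
  have eliminated: "(\<Sum>j<n. (c j * (\<mu> j l - \<mu> n l)) *s x j) = 0" for l
  proof -
    have "0 = A l *v (\<Sum>j<Suc n. c j *s x j) - \<mu> n l *s (\<Sum>j<Suc n. c j *s x j)"
      using Suc.prems(4) by simp
    also have "\<dots> = (\<Sum>j<Suc n. (c j * (\<mu> j l - \<mu> n l)) *s x j)"
      using Suc.prems(2)
      by (simp add: vec.sum vec.scale_sum_right sum_subtractf[symmetric] algebra_simps
          vector_scalar_commute vec.scale_right_diff_distrib vec.scale_left_diff_distrib)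
    finally show ?thesis by simp
  qed
  have "c j = 0" if "j < n" for j
  proof -
    have "\<mu> j \<noteq> \<mu> n" using Suc.prems(3) that by (auto dest: inj_onD)
    then obtain l where "\<mu> j l \<noteq> \<mu> n l" by auto
    moreover have "c j * (\<mu> j l - \<mu> n l) = 0"
      using Suc.IH[OF _ _ _ eliminated] Suc.prems(1-3) that by (auto simp: inj_on_def)
    ultimately show ?thesis by simp
  qed
  moreover from this have "c n *s x n = 0" using Suc.prems(4) by simp
  then have "c n = 0" using Suc.prems(1) by simp
  ultimately show ?case using less_Suc_eq by auto
qed

lemma common_eigenvectors_independent:
  fixes A :: "'l \<Rightarrow> 'a::field^'n^'n" and x :: "nat \<Rightarrow> 'a^'n"
  assumes nonzero: "\<forall>j<n. x j \<noteq> 0"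
    and eigen: "\<forall>j<n. \<forall>l. A l *v x j = \<mu> j l *s x j"
    and distinct: "inj_on \<mu> {..<n}"
  shows "inj_on x {..<n} \<and> vec.independent (x ` {..<n})"
proof
  show inj: "inj_on x {..<n}"
  proof (rule inj_onI)
    fix i j assume i: "i \<in> {..<n}" and j: "j \<in> {..<n}" and "x i = x j"
    then have "\<mu> i l *s x i = \<mu> j l *s x i" for l
      using eigen i j by (metis lessThan_iff)
    then have "(\<mu> i l - \<mu> j l) *s x i = 0" for l
      by (simp add: vec.scale_left_diff_distrib)
    then have "\<mu> i = \<mu> j" using nonzero i by auto
    then show "i = j" using distinct i j by (auto dest: inj_onD)
  qed
  show "vec.independent (x ` {..<n})"
  proof (rule vec.independent_if_scalars_zero)
    fix f v assume "(\<Sum>v\<in>x ` {..<n}. f v *s v) = 0" and "v \<in> x ` {..<n}"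
    then show "f v = 0"
      using common_eigenvectors_combination_zero[OF nonzero eigen distinct, of "f \<circ> x"]
      by (auto simp: sum.reindex[OF inj])
  qed simp
qed

lemma jge_pair_common_eigenvector:
  assumes left_inverse: "B ** slice_mix T \<gamma> = mat 1" and "jge_pair T L x"
  shows "\<exists>\<mu>. L = vec.span {\<mu>} \<and> (\<forall>l. (B ** T l) *v x = \<mu>$l *s x)"
proof -
  obtain lam y where "x \<noteq> 0" and L: "L = vec.span {lam}" and Tx: "\<forall>l. T l *v x = lam$l *s y"
    using assms(2) unfolding jge_pair_def by blast
  define c where "c = lin_form lam \<gamma>"
  have Mx: "slice_mix T \<gamma> *v x = c *s y"
    unfolding c_def using Tx by (rule slice_mix_mult_jge_vector)
  have "c \<noteq> 0"
    using Mx \<open>x \<noteq> 0\<close> matrix_left_invertible_ker left_inverse by fastforce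
  define \<mu> where "\<mu> = (1 / c) *s lam"
  have lam: "lam = c *s \<mu>" using \<open>c \<noteq> 0\<close> unfolding \<mu>_def by simp
  have "(B ** T l) *v x = \<mu>$l *s x" for l
  proof -
    have "(B ** T l) *v x = B *v (\<mu>$l *s (c *s y))"
      using Tx lam by (simp add: matrix_vector_mul_assoc[symmetric] mult.commute)
    also have "\<dots> = \<mu>$l *s x"
      by (simp add: Mx[symmetric] vector_scalar_commute matrix_vector_mul_assoc left_inverse)
    finally show ?thesis .
  qed
  moreover have "L = vec.span {\<mu>}"
    using L lam vec_span_singleton_scale[OF \<open>c \<noteq> 0\<close>] by simp
  ultimately show ?thesis by blast
qed

lemma jge_pairs_independent:
  fixes T :: "'k::finite \<Rightarrow> 'a::field^'r::finite^'r" and x :: "nat \<Rightarrow> 'a^'r"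
  assumes "slice_mix_invertible T"
    and pairs: "\<forall>j<n. jge_pair T (L j) (x j)" and distinct: "inj_on L {..<n}"
  shows "inj_on x {..<n} \<and> vec.independent (x ` {..<n})"
proof -
  obtain \<gamma> where "invertible (slice_mix T \<gamma>)"
    using assms(1) unfolding slice_mix_invertible_def by blast
  then obtain B where B: "B ** slice_mix T \<gamma> = mat 1"
    unfolding invertible_left_inverse by blast
  have "\<forall>j. \<exists>\<mu>. j < n \<longrightarrow> L j = vec.span {\<mu>} \<and> (\<forall>l. (B ** T l) *v x j = \<mu>$l *s x j)"
    using jge_pair_common_eigenvector[OF B] pairs by blast
  then obtain \<mu> where \<mu>: "\<And>j. j < n \<Longrightarrow> L j = vec.span {\<mu> j}"
    and eigen: "\<forall>j<n. \<forall>l. (B ** T l) *v x j = \<mu> j $ l *s x j"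
    by metis
  have "inj_on (\<lambda>j l. \<mu> j $ l) {..<n}"
  proof (rule inj_onI)
    fix i j assume "i \<in> {..<n}" "j \<in> {..<n}" "(\<lambda>l. \<mu> i $ l) = (\<lambda>l. \<mu> j $ l)"
    then have "\<mu> i = \<mu> j" by (simp add: vec_eq_iff fun_eq_iff)
    then have "L i = L j" using \<mu> \<open>i \<in> {..<n}\<close> \<open>j \<in> {..<n}\<close> by simp
    then show "i = j" using inj_onD[OF distinct] \<open>i \<in> {..<n}\<close> \<open>j \<in> {..<n}\<close> by blast
  qed
  moreover have "\<forall>j<n. x j \<noteq> 0"
    using pairs unfolding jge_pair_def by blast
  ultimately show ?thesis
    using common_eigenvectors_independent[where \<mu>="\<lambda>j l. \<mu> j $ l" and A="\<lambda>l. B ** T l"] eigen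
    by blast
qed

definition monomial :: "('k \<Rightarrow> nat) \<Rightarrow> 'a::field^'k::finite \<Rightarrow> 'a" where
  "monomial e \<gamma> = (\<Prod>k\<in>UNIV. (\<gamma>$k) ^ e k)"

lemma poly_fun_iff_monomials:
  "poly_fun f \<longleftrightarrow> (\<exists>c E. finite E \<and> (\<forall>\<gamma>. f \<gamma> = (\<Sum>e\<in>E. c e * monomial e \<gamma>)))"
  unfolding poly_fun_def monomial_def ..

text \<open>Exponents may repeat in the sum, which is what makes products easy to handle.\<close>
lemma poly_fun_sum_monomials:
  fixes f :: "'a::field^'k::finite \<Rightarrow> 'a"
  assumes "finite S" and "\<And>\<gamma>. f \<gamma> = (\<Sum>s\<in>S. d s * monomial (g s) \<gamma>)"
  shows "poly_fun f"
proof -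
  define c where "c e = (\<Sum>s\<in>{s\<in>S. g s = e}. d s)" for e
  have "f \<gamma> = (\<Sum>e\<in>g ` S. c e * monomial e \<gamma>)" for \<gamma>
  proof -
    have "(\<Sum>e\<in>g ` S. c e * monomial e \<gamma>)
        = (\<Sum>e\<in>g ` S. \<Sum>s\<in>{s\<in>S. g s = e}. d s * monomial (g s) \<gamma>)"
      unfolding c_def sum_distrib_right by (rule sum.cong) auto
    also have "\<dots> = (\<Sum>s\<in>S. d s * monomial (g s) \<gamma>)"
      by (rule sum.group) (use assms in auto)
    finally show ?thesis using assms(2) by simp
  qed
  then show ?thesis unfolding poly_fun_iff_monomials using assms(1) by blast
qed

lemma monomial_add: "monomial (\<lambda>k. e1 k + e2 k) \<gamma> = monomial e1 \<gamma> * monomial e2 \<gamma>"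
  unfolding monomial_def by (simp add: power_add prod.distrib)

lemma poly_fun_mult:
  fixes f g :: "'a::field^'k::finite \<Rightarrow> 'a"
  assumes "poly_fun f" "poly_fun g"
  shows "poly_fun (\<lambda>\<gamma>. f \<gamma> * g \<gamma>)"
proof -
  obtain c1 E1 where 1: "finite E1" "\<And>\<gamma>. f \<gamma> = (\<Sum>e\<in>E1. c1 e * monomial e \<gamma>)"
    using assms(1) unfolding poly_fun_iff_monomials by blast
  obtain c2 E2 where 2: "finite E2" "\<And>\<gamma>. g \<gamma> = (\<Sum>e\<in>E2. c2 e * monomial e \<gamma>)"
    using assms(2) unfolding poly_fun_iff_monomials by blast
  show ?thesis
  proof (rule poly_fun_sum_monomials[where S="E1 \<times> E2" and d="\<lambda>(e1, e2). c1 e1 * c2 e2"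
        and g="\<lambda>(e1, e2) k. e1 k + e2 k"])
    fix \<gamma>
    have "f \<gamma> * g \<gamma> = (\<Sum>e1\<in>E1. \<Sum>e2\<in>E2. (c1 e1 * monomial e1 \<gamma>) * (c2 e2 * monomial e2 \<gamma>))"
      unfolding 1 2 by (rule sum_product)
    also have "\<dots> = (\<Sum>(e1, e2)\<in>E1 \<times> E2. (c1 e1 * monomial e1 \<gamma>) * (c2 e2 * monomial e2 \<gamma>))"
      by (rule sum.cartesian_product)
    also have "\<dots> = (\<Sum>s\<in>E1 \<times> E2. (case s of (e1, e2) \<Rightarrow> c1 e1 * c2 e2) *
          monomial (case s of (e1, e2) \<Rightarrow> \<lambda>k. e1 k + e2 k) \<gamma>)"
      by (rule sum.cong) (auto simp: monomial_add algebra_simps)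
    finally show "f \<gamma> * g \<gamma> = \<dots>" .
  qed (use 1 2 in simp)
qed

lemma poly_fun_const: "poly_fun (\<lambda>\<gamma>::'a::field^'k::finite. a)"
  by (rule poly_fun_sum_monomials[where S="{()}" and d="\<lambda>_. a" and g="\<lambda>_ _. 0"])
    (auto simp: monomial_def)

lemma poly_fun_lin_form: "poly_fun (lin_form (lam :: 'a::field^'k::finite))"
proof (rule poly_fun_sum_monomials[where S=UNIV and d="\<lambda>k. lam$k"
      and g="\<lambda>k j. of_bool (j = k)"])
  fix \<gamma> :: "'a^'k"
  have "monomial (\<lambda>j. of_bool (j = k)) \<gamma> = (\<Prod>j\<in>UNIV. if j = k then \<gamma>$j else 1)" for k
    unfolding monomial_def by (rule prod.cong) auto
  then have "monomial (\<lambda>j. of_bool (j = k)) \<gamma> = \<gamma>$k" for k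
    by (simp add: prod.delta)
  then show "lin_form lam \<gamma> = (\<Sum>k\<in>UNIV. lam$k * monomial (\<lambda>j. of_bool (j = k)) \<gamma>)"
    unfolding lin_form_def by simp
qed simp

lemma poly_fun_prod:
  fixes f :: "'b \<Rightarrow> 'a::field^'k::finite \<Rightarrow> 'a"
  assumes "finite S" "\<And>s. s \<in> S \<Longrightarrow> poly_fun (f s)"
  shows "poly_fun (\<lambda>\<gamma>. \<Prod>s\<in>S. f s \<gamma>)"
  using assms
proof (induction S rule: finite_induct)
  case empty
  then show ?case using poly_fun_const by simp
next
  case (insert s S)
  then show ?case using poly_fun_mult[of "f s" "\<lambda>\<gamma>. \<Prod>s\<in>S. f s \<gamma>"] by simp
qed

lemma poly_fun_on_line:
  fixes q :: "'a::field^'k::finite \<Rightarrow> 'a"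
  assumes "poly_fun q"
  shows "\<exists>p. \<forall>t. q (t *s v) = poly p t"
proof -
  obtain c E where E: "\<And>\<gamma>. q \<gamma> = (\<Sum>e\<in>E. c e * monomial e \<gamma>)"
    using assms unfolding poly_fun_iff_monomials by blast
  define p where "p = (\<Sum>e\<in>E. smult (c e) (\<Prod>k\<in>UNIV. [:0, v$k:] ^ e k))"
  have "q (t *s v) = poly p t" for t
    unfolding E p_def monomial_def by (simp add: poly_sum poly_prod mult.commute power_mult_distrib)
  then show ?thesis by blast
qed

lemma lin_form_scale: "lin_form a (t *s u) = t * lin_form a u"
  unfolding lin_form_def by (simp add: sum_distrib_left algebra_simps)

text \<open>On the line \<open>t \<mapsto> t u\<close>, \<open>f\<close> is the monomial \<open>f(u) t\<^sup>|\<^sup>S\<^sup>|\<close>, while the factorisation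
  restricts to \<open>(lin_form lam u \<cdot> t)\<^sup>m\<close> times a polynomial; compare degrees.\<close>
lemma linear_form_power_factor_le:
  fixes f :: "'a::field_char_0^'k::finite \<Rightarrow> 'a"
  assumes "finite S" and prod: "\<forall>\<gamma>. f \<gamma> = (\<Prod>r\<in>S. lin_form (a r) \<gamma>)"
    and "f u \<noteq> 0" and "poly_fun q" and factor: "\<forall>\<gamma>. f \<gamma> = lin_form lam \<gamma> ^ m * q \<gamma>"
  shows "m \<le> card S"
proof -
  obtain p where p: "\<forall>t. q (t *s u) = poly p t"
    using poly_fun_on_line[OF \<open>poly_fun q\<close>] by blast
  define c where "c = lin_form lam u ^ m"
  have "c \<noteq> 0" and "p \<noteq> 0"
    using \<open>f u \<noteq> 0\<close> factor p[rule_format, of 1] unfolding c_def by auto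
  have "poly (monom (f u) (card S)) t = poly (monom c m * p) t" for t
  proof -
    have "poly (monom (f u) (card S)) t = f (t *s u)"
      using prod by (simp add: poly_monom lin_form_scale prod.distrib mult.commute)
    also have "\<dots> = poly (monom c m * p) t"
      using factor p by (simp add: poly_monom lin_form_scale c_def power_mult_distrib)
    finally show ?thesis .
  qed
  then have "monom (f u) (card S) = monom c m * p"
    using poly_eq_poly_eq_iff by blast
  then have "card S = m + degree p"
    using \<open>f u \<noteq> 0\<close> \<open>c \<noteq> 0\<close> \<open>p \<noteq> 0\<close> by (metis degree_monom_eq degree_mult_eq monom_eq_0_iff)
  then show ?thesis by simp
qed

lemma slice_mix_invertible_iff_char_poly:
  "slice_mix_invertible T \<longleftrightarrow> (\<exists>\<gamma>. char_poly T \<gamma> \<noteq> 0)"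
  unfolding slice_mix_invertible_def char_poly_def by (simp add: invertible_det_nz)

lemma alg_mult_linear_factor_pos:
  fixes T :: "'k::finite \<Rightarrow> 'a::field_char_0^'r::finite^'r"
  assumes "slice_mix_invertible T"
    and "finite S" and prod: "\<forall>\<gamma>. char_poly T \<gamma> = (\<Prod>s\<in>S. lin_form (a s) \<gamma>)" and "r \<in> S"
  shows "alg_mult T (a r) > 0"
proof -
  obtain u where "char_poly T u \<noteq> 0"
    using assms(1) unfolding slice_mix_invertible_iff_char_poly by blast
  let ?divides = "\<lambda>m. \<exists>q. poly_fun q \<and> (\<forall>\<gamma>. char_poly T \<gamma> = lin_form (a r) \<gamma> ^ m * q \<gamma>)"
  have "?divides 1"
  proof (intro exI conjI allI)
    show "poly_fun (\<lambda>\<gamma>. \<Prod>s\<in>S - {r}. lin_form (a s) \<gamma>)"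
      using \<open>finite S\<close> by (intro poly_fun_prod poly_fun_lin_form) simp
    show "char_poly T \<gamma> = lin_form (a r) \<gamma> ^ 1 * (\<Prod>s\<in>S - {r}. lin_form (a s) \<gamma>)" for \<gamma>
      using prod prod.remove[OF \<open>finite S\<close> \<open>r \<in> S\<close>] by simp
  qed
  moreover have "m \<le> card S" if "?divides m" for m
    using that linear_form_power_factor_le[OF \<open>finite S\<close> prod \<open>char_poly T u \<noteq> 0\<close>] by blast
  ultimately have "1 \<le> alg_mult T (a r)"
    unfolding alg_mult_def by (rule Greatest_le_nat)
  then show ?thesis by simp
qed

lemma jge_pair_exists_if_geom_mult_pos:
  assumes "geom_mult T L > 0"
  shows "\<exists>x. jge_pair T L x"
  using assms unfolding geom_mult_def by (metis vec.dim_empty empty_Collect_eq less_irrefl)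

lemma simple_tensor_jge_vectors_basis:
  fixes T :: "'k::finite \<Rightarrow> 'a::field_char_0^'r::finite^'r"
  assumes "simple_tensor T" and geom: "\<forall>L. jge_value T L \<longrightarrow> geom_mult T L \<ge> 1"
  shows "\<exists>B. B \<subseteq> {x. jge_vector T x} \<and> vec.independent B \<and> vec.span B = UNIV"
proof -
  obtain a :: "'r \<Rightarrow> 'a^'k" where
    prod: "\<forall>\<gamma>. char_poly T \<gamma> = (\<Prod>r\<in>UNIV. lin_form (a r) \<gamma>)" and
    non_proportional: "\<forall>r s. r \<noteq> s \<longrightarrow> \<not> (\<exists>c. a r = c *s a s \<or> a s = c *s a r)"
    and invertible: "slice_mix_invertible T"
    using assms(1) unfolding simple_tensor_def by blast
  have "\<exists>x. jge_pair T (vec.span {a r}) x" for r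
  proof (rule jge_pair_exists_if_geom_mult_pos)
    have "jge_value T (vec.span {a r})"
      using alg_mult_linear_factor_pos[OF invertible finite_class.finite_UNIV prod UNIV_I]
      unfolding jge_value_def by blast
    then show "geom_mult T (vec.span {a r}) > 0" using geom by fastforce
  qed
  then obtain X where X: "\<And>r. jge_pair T (vec.span {a r}) (X r)" by metis
  obtain h where h: "bij_betw h {..<CARD('r)} (UNIV :: 'r set)"
    using ex_bij_betw_nat_finite[of "UNIV :: 'r set"] by (auto simp: atLeast0LessThan)
  have "inj_on (\<lambda>j. vec.span {a (h j)}) {..<CARD('r)}"
  proof (rule inj_onI)
    fix i j assume "i \<in> {..<CARD('r)}" "j \<in> {..<CARD('r)}"
      and "vec.span {a (h i)} = vec.span {a (h j)}"
    then have "a (h i) \<in> vec.span {a (h j)}" by (metis vec.span_base singletonI)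
    then have "h i = h j" using non_proportional by (auto simp: vec.span_singleton)
    then show "i = j" using h \<open>i \<in> _\<close> \<open>j \<in> _\<close> by (auto simp: bij_betw_def dest: inj_onD)
  qed
  then have "inj_on (X \<circ> h) {..<CARD('r)}"
    and independent: "vec.independent ((X \<circ> h) ` {..<CARD('r)})"
    using jge_pairs_independent[OF invertible, where x="X \<circ> h" and L="\<lambda>j. vec.span {a (h j)}"]
      X by simp_all
  then have "card ((X \<circ> h) ` {..<CARD('r)}) = vec.dim (UNIV :: ('a^'r) set)"
    by (simp only: card_image vec_dim_card card_lessThan)
  then have "vec.span ((X \<circ> h) ` {..<CARD('r)}) = UNIV"
    using vec.card_eq_dim[OF subset_UNIV] independent by auto
  moreover have "(X \<circ> h) ` {..<CARD('r)} \<subseteq> {x. jge_vector T x}"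
    unfolding jge_vector_def using X by auto
  ultimately show ?thesis
    using independent by blast
qed

theorem lemma3p2:
  fixes T :: "'k::finite \<Rightarrow> 'a::real_normed_field^'r::finite^'r"
  assumes "slice_mix_invertible T"
  shows "(\<forall>(n::nat) (L :: nat \<Rightarrow> ('a^'k) set) (x :: nat \<Rightarrow> 'a^'r).
            (\<forall>j<n. jge_pair T (L j) (x j)) \<and> inj_on L {..<n} \<longrightarrow>
            inj_on x {..<n} \<and> vec.independent (x ` {..<n}))
       \<and> (simple_tensor T \<and> (\<forall>L. jge_value T L \<longrightarrow> geom_mult T L \<ge> 1) \<longrightarrow>
            (\<exists>B. B \<subseteq> {x. jge_vector T x} \<and> vec.independent B \<and> vec.span B = UNIV))"
  using jge_pairs_independent[OF assms] simple_tensor_jge_vectors_basis by blast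

end
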